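(* For every complex number $s$ with $\operatorname{Re}(s)>2$, $$\sum_{n\ge1}\frac{\mu(n)\delta(n)}{n^s}=-\frac{F(s-1)}{\zeta(s-1)}.$$
   Context: The arithmetic derivative $\delta$ is defined by $\delta(p)=1$ for every prime $p$ and $\delta(mn)=m\delta(n)+n\delta(m)$ for all positive integers $m,n$; equivalently $\delta(1)=0$ and $\delta(n)=n\sum_{p^\alpha\| n}\alpha/p$. $\mu$ is the Möbius function, $\zeta$ is the Riemann zeta function and $F(s)=\sum_{p\text{ prime}}\frac{1}{p^{s+1}-p}$. *)

theory Defs
  imports "HOL-Complex_Analysis.Complex_Analysis" "HOL-Computational_Algebra.Squarefree"
begin

text \<open>Arithmetic derivative: delta 0 = 0 by convention (0 never occurs in the statement),
  delta n = n * (sum over primes p dividing n of multiplicity p n / p).\<close>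
definition arith_deriv :: "nat \<Rightarrow> nat" where
  "arith_deriv n = (if n = 0 then 0 else
     (\<Sum>p\<in>prime_factors n. multiplicity p n * (n div p)))"

definition moebius_mu :: "nat \<Rightarrow> int" where
  "moebius_mu n = (if n = 0 then 0 else if squarefree n then (-1) ^ card (prime_factors n) else 0)"

text \<open>Riemann zeta function on the half-plane Re s > 1, given by its Dirichlet series
  (this is the only region in which it is used).\<close>
definition zeta_dirichlet :: "complex \<Rightarrow> complex" where
  "zeta_dirichlet s = (\<Sum>\<^sub>\<infinity>n\<in>{1::nat..}. 1 / of_nat n powr s)"

definition F_prime :: "complex \<Rightarrow> complex" where
  "F_prime s = (\<Sum>\<^sub>\<infinity>p\<in>{p::nat. prime p}. 1 / (of_nat p powr (s + 1) - of_nat p))"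

end

theory Submission
  imports Defs
begin

text \<open>
  Write \<open>a(n) = \<mu>(n) \<delta>(n) / n\<close>, so that the series in question is the Dirichlet series of \<open>a\<close>
  at \<open>w = s - 1\<close>. On squarefree \<open>d\<close> one has \<open>\<delta>(d)/d = \<Sum>\<^bsub>p | d\<^esub> 1/p\<close>, and an inclusion-exclusion
  over the sets of prime divisors of \<open>n\<close> shows that \<open>\<Sum>\<^bsub>d | n\<^esub> a(d)\<close> is \<open>-1/p\<close> when \<open>n = p\<^sup>k\<close>
  (\<open>k \<ge> 1\<close>) and \<open>0\<close> otherwise. Multiplying Dirichlet series, \<open>(\<Sum> a(n) n\<^sup>-\<^sup>w) \<zeta>(w)\<close> is therefore
  \<open>-\<Sum>\<^bsub>p,k\<^esub> p\<^sup>-\<^sup>1 p\<^sup>-\<^sup>k\<^sup>w = -F(w)\<close>. Finally \<open>\<zeta>(w) \<noteq> 0\<close> because \<open>(\<Sum> \<mu>(n) n\<^sup>-\<^sup>w) \<zeta>(w) = 1\<close>. Absolute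
  convergence of \<open>\<Sum> a(n) n\<^sup>-\<^sup>w\<close> for \<open>Re w > 1\<close> comes from \<open>|a(n)| \<le> \<omega>(n) = O(n\<^sup>\<epsilon>)\<close>.
\<close>

lemma sum_Pow_alternating:
  assumes "finite P"
  shows "(\<Sum>T\<in>Pow (P::'b set). (-1::'a::ring_1) ^ card T) = (if P = {} then 1 else 0)"
proof -
  have "(if P = {} then 1 else 0) = (\<Sum>T\<in>Pow P. (-1::'a) ^ card T * 1)"
    by (rule inclusion_exclusion_symmetric[OF _ assms]) (simp add: if_distrib cong: if_cong)
  then show ?thesis by simp
qed

lemma sum_Pow_alternating_sum:
  fixes g :: "'b \<Rightarrow> 'a::ring_1"
  assumes "finite P"
  shows "(\<Sum>T\<in>Pow P. (-1) ^ card T * sum g T) = (if is_singleton P then - g (the_elem P) else 0)"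
proof (rule inclusion_exclusion_symmetric[OF _ assms, symmetric])
  fix S :: "'b set" assume "finite S"
  let ?f = "\<lambda>T. if is_singleton T then - g (the_elem T) else 0"
  have "(\<Sum>T\<in>Pow S. (-1) ^ card T * ?f T) = (\<Sum>T\<in>(\<lambda>q. {q}) ` S. (-1) ^ card T * ?f T)"
    using \<open>finite S\<close> by (intro sum.mono_neutral_right) (auto simp: is_singleton_def)
  also have "\<dots> = sum g S"
    by (subst sum.reindex) (auto simp: inj_on_def)
  finally show "sum g S = (\<Sum>T\<in>Pow S. (-1) ^ card T * ?f T)" ..
qed

section \<open>Squarefree divisors and the Moebius function\<close>

lemma prod_prime_factors_dvd:
  assumes "(n::nat) \<noteq> 0"
  shows "\<Prod>(prime_factors n) dvd n"
proof -
  have "(\<Prod>p\<in>prime_factors n. p) dvd (\<Prod>p\<in>prime_factors n. p ^ multiplicity p n)"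
    by (intro prod_dvd_prod) (simp add: prime_factors_multiplicity dvd_power)
  also have "\<dots> = n" using prod_prime_factors[OF assms] by simp
  finally show ?thesis .
qed

lemma
  fixes S :: "nat set"
  assumes "finite S" "\<forall>p\<in>S. prime p"
  shows prime_factors_prod_primes: "prime_factors (\<Prod>S) = S"
    and squarefree_prod_primes: "squarefree (\<Prod>S)"
proof -
  show "prime_factors (\<Prod>S) = S"
    using assms by (subst prime_factors_prod) (auto simp: prime_prime_factors)
  show "squarefree (\<Prod>S)"
    using assms by (intro squarefree_prod_coprime) (auto simp: primes_coprime squarefree_prime)
qed

lemma multiplicity_squarefree:
  assumes "squarefree (n::nat)" "p \<in> prime_factors n"
  shows "multiplicity p n = 1"
proof -
  have "n \<noteq> 0" using assms(1) by (metis not_squarefree_0)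
  then show ?thesis using assms squarefree_factorial_semiring' by blast
qed

lemma prod_prime_factors_squarefree:
  assumes "squarefree (n::nat)"
  shows "\<Prod>(prime_factors n) = n"
proof -
  have "n \<noteq> 0" using assms by (metis not_squarefree_0)
  then have "(\<Prod>p\<in>prime_factors n. p ^ multiplicity p n) = n" using prod_prime_factors[of n] by simp
  then show ?thesis using multiplicity_squarefree[OF assms] by (simp cong: prod.cong)
qed

lemma sum_divisors_moebius_eq_sum_Pow:
  fixes f :: "nat \<Rightarrow> 'a::comm_ring_1"
  assumes n: "n > 0"
  shows "(\<Sum>d | d dvd n. of_int (moebius_mu d) * f d)
       = (\<Sum>S\<in>Pow (prime_factors n). (-1) ^ card S * f (\<Prod>S))"
proof -
  have "(\<Sum>d | d dvd n. of_int (moebius_mu d) * f d)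
      = (\<Sum>d | d dvd n \<and> squarefree d. of_int (moebius_mu d) * f d)"
    using n by (intro sum.mono_neutral_right) (auto simp: moebius_mu_def)
  also have "\<dots> = (\<Sum>S\<in>Pow (prime_factors n). (-1) ^ card S * f (\<Prod>S))"
  proof (rule sum.reindex_bij_witness[of _ "\<lambda>S. \<Prod>S" prime_factors])
    fix d assume d: "d \<in> {d. d dvd n \<and> squarefree d}"
    then show "\<Prod>(prime_factors d) = d" by (simp add: prod_prime_factors_squarefree)
    show "prime_factors d \<in> Pow (prime_factors n)" using d n by (auto intro: dvd_prime_factors[THEN subsetD])
    show "(-1) ^ card (prime_factors d) * f (\<Prod>(prime_factors d)) = of_int (moebius_mu d) * f d"
      using d by (auto simp: moebius_mu_def prod_prime_factors_squarefree not_squarefree_0)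
  next
    fix S assume S: "S \<in> Pow (prime_factors n)"
    then have fin: "finite S" and pr: "\<forall>p\<in>S. prime p" using finite_subset by auto
    show "prime_factors (\<Prod>S) = S" using prime_factors_prod_primes[OF fin pr] .
    have "\<Prod>S dvd \<Prod>(prime_factors n)" using S by (intro prod_dvd_prod_subset) auto
    also have "\<dots> dvd n" using prod_prime_factors_dvd n by simp
    finally show "\<Prod>S \<in> {d. d dvd n \<and> squarefree d}" using squarefree_prod_primes[OF fin pr] by simp
  qed
  finally show ?thesis .
qed

lemma sum_divisors_moebius:
  assumes "n > 0"
  shows "(\<Sum>d | d dvd n. of_int (moebius_mu d) :: 'a::comm_ring_1) = (if n = 1 then 1 else 0)"
proof -
  have "(\<Sum>d | d dvd n. of_int (moebius_mu d) :: 'a) = (\<Sum>S\<in>Pow (prime_factors n). (-1) ^ card S)"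
    using sum_divisors_moebius_eq_sum_Pow[OF assms, of "\<lambda>_. 1"] by simp
  also have "\<dots> = (if n = 1 then 1 else 0)"
    using assms by (simp add: sum_Pow_alternating prime_factorization_empty_iff)
  finally show ?thesis .
qed

section \<open>The coefficients \<open>\<mu>(n) \<delta>(n) / n\<close>\<close>

lemma arith_deriv_div_squarefree:
  assumes "squarefree (n::nat)"
  shows "of_nat (arith_deriv n) / of_nat n = (\<Sum>p\<in>prime_factors n. 1 / of_nat p :: 'a::field_char_0)"
proof -
  have n: "n \<noteq> 0" using assms by (metis not_squarefree_0)
  have "of_nat (arith_deriv n) = (\<Sum>p\<in>prime_factors n. of_nat (n div p) :: 'a)"
    using n multiplicity_squarefree[OF assms] by (simp add: arith_deriv_def)
  also have "\<dots> = (\<Sum>p\<in>prime_factors n. of_nat n / of_nat p)"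
  proof (rule sum.cong)
    fix p assume "p \<in> prime_factors n"
    then have "p dvd n" "p > 0" by (auto simp: in_prime_factors_imp_prime prime_gt_0_nat)
    then show "(of_nat (n div p) :: 'a) = of_nat n / of_nat p" by (auto elim!: dvdE)
  qed simp
  finally show ?thesis using n by (simp add: sum_divide_distrib)
qed

definition moebius_deriv_ratio :: "nat \<Rightarrow> complex" where
  "moebius_deriv_ratio n = of_int (moebius_mu n) * of_nat (arith_deriv n) / of_nat n"

lemma sum_divisors_moebius_deriv_ratio:
  assumes n: "n > 0"
  shows "(\<Sum>d | d dvd n. moebius_deriv_ratio d)
       = (if is_singleton (prime_factors n) then - 1 / of_nat (the_elem (prime_factors n)) else 0)"
proof -
  have "(\<Sum>d | d dvd n. moebius_deriv_ratio d)
      = (\<Sum>d | d dvd n. of_int (moebius_mu d) * (of_nat (arith_deriv d) / of_nat d))"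
    by (simp add: moebius_deriv_ratio_def)
  also have "\<dots> = (\<Sum>S\<in>Pow (prime_factors n). (-1) ^ card S * (of_nat (arith_deriv (\<Prod>S)) / of_nat (\<Prod>S)))"
    by (rule sum_divisors_moebius_eq_sum_Pow[OF n])
  also have "\<dots> = (\<Sum>S\<in>Pow (prime_factors n). (-1) ^ card S * (\<Sum>p\<in>S. 1 / of_nat p))"
  proof (rule sum.cong)
    fix S assume "S \<in> Pow (prime_factors n)"
    then have "finite S" "\<forall>p\<in>S. prime p" using finite_subset by auto
    then show "(-1) ^ card S * (of_nat (arith_deriv (\<Prod>S)) / of_nat (\<Prod>S))
             = (-1) ^ card S * (\<Sum>p\<in>S. 1 / of_nat p :: complex)"
      by (subst arith_deriv_div_squarefree) (simp_all add: squarefree_prod_primes prime_factors_prod_primes)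
  qed simp
  also have "\<dots> = (if is_singleton (prime_factors n) then - 1 / of_nat (the_elem (prime_factors n)) else 0)"
    by (simp add: sum_Pow_alternating_sum)
  finally show ?thesis .
qed

lemma two_power_card_prime_factors_le:
  assumes "(n::nat) > 0"
  shows "2 ^ card (prime_factors n) \<le> n"
proof -
  have "(2::nat) ^ card (prime_factors n) = (\<Prod>p\<in>prime_factors n. 2)" by simp
  also have "\<dots> \<le> \<Prod>(prime_factors n)"
    by (intro prod_mono) (auto intro: prime_ge_2_nat)
  also have "\<dots> \<le> n" using prod_prime_factors_dvd assms by (intro dvd_imp_le) auto
  finally show ?thesis .
qed

lemma card_prime_factors_le_powr:
  assumes n: "(n::nat) > 0" and e: "\<epsilon> > 0"
  shows "real (card (prime_factors n)) \<le> real n powr \<epsilon> / (2 powr \<epsilon> - 1)"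
proof -
  define k where "k = card (prime_factors n)"
  define t where "t = (2::real) powr \<epsilon>"
  have t1: "t > 1" unfolding t_def using e powr_less_mono[of 0 e 2] by simp
  have "1 + real k * (t - 1) \<le> (1 + (t - 1)) ^ k" using t1 by (intro Bernoulli_inequality) auto
  also have "\<dots> = (2 powr real k) powr \<epsilon>" unfolding t_def
    by (simp add: powr_powr powr_realpow[symmetric] mult.commute)
  also have "\<dots> \<le> real n powr \<epsilon>"
  proof (rule powr_mono2)
    have "(2::real) powr real k = real (2 ^ k)" by (simp add: powr_realpow)
    also have "\<dots> \<le> real n" using two_power_card_prime_factors_le[OF n] unfolding k_def by linarith
    finally show "2 powr real k \<le> real n" .
  qed (use e in auto)
  finally have "real k * (t - 1) \<le> real n powr \<epsilon>" by simp
  then show ?thesis using t1 unfolding k_def t_def by (simp add: field_simps)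
qed

lemma norm_moebius_deriv_ratio_le: "norm (moebius_deriv_ratio n) \<le> real (card (prime_factors n))"
proof (cases "squarefree n")
  case False then show ?thesis by (simp add: moebius_deriv_ratio_def moebius_mu_def)
next
  case True
  have "norm (moebius_deriv_ratio n) = norm (\<Sum>p\<in>prime_factors n. 1 / of_nat p :: complex)"
    using True by (simp add: moebius_deriv_ratio_def moebius_mu_def arith_deriv_div_squarefree
        norm_mult not_squarefree_0 flip: times_divide_eq_right)
  also have "\<dots> \<le> (\<Sum>p\<in>prime_factors n. norm (1 / of_nat p :: complex))"
    by (rule norm_sum)
  also have "\<dots> \<le> (\<Sum>p\<in>prime_factors n. 1)"
    by (intro sum_mono) (auto simp: norm_divide dest!: in_prime_factors_imp_prime prime_gt_1_nat)
  finally show ?thesis by simp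
qed

section \<open>Dirichlet series\<close>

lemma norm_of_nat_powr: "norm (of_nat n powr w :: complex) = real n powr Re w"
  using norm_powr_real_powr[of "of_nat n" w] by simp

lemma norm_div_of_nat_powr:
  "n \<ge> 1 \<Longrightarrow> norm (x / of_nat n powr w :: complex) = norm x * real n powr (- Re w)"
  by (simp add: norm_divide norm_of_nat_powr powr_minus_divide)

lemma of_nat_mult_powr: "(of_nat m * of_nat n :: complex) powr w = of_nat m powr w * of_nat n powr w"
  by (simp add: powr_times_real)

lemma of_nat_power_powr: "(of_nat q ^ k :: complex) powr w = (of_nat q powr w) ^ k"
proof (induction k)
  case (Suc k)
  have "(of_nat q ^ Suc k :: complex) powr w = (of_nat q * of_nat (q ^ k)) powr w" by simp
  also have "\<dots> = of_nat q powr w * of_nat (q ^ k) powr w" by (rule of_nat_mult_powr)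
  finally show ?case using Suc by simp
qed simp

lemma has_sum_mult_abs_summable:
  fixes f g :: "_ \<Rightarrow> 'a::{real_normed_field, banach}"
  assumes f: "(\<lambda>x. norm (f x)) summable_on A" and g: "(\<lambda>y. norm (g y)) summable_on B"
  shows "((\<lambda>(x, y). f x * g y) has_sum (infsum f A * infsum g B)) (A \<times> B)"
proof (rule has_sum_SigmaI[where g = "\<lambda>x. f x * infsum g B"])
  show "((\<lambda>y. case (x, y) of (x, y) \<Rightarrow> f x * g y) has_sum f x * infsum g B) B" for x
    using has_sum_infsum[OF abs_summable_summable[OF g]] by (simp add: has_sum_cmult_right)
  show "((\<lambda>x. f x * infsum g B) has_sum infsum f A * infsum g B) A"
    using has_sum_infsum[OF abs_summable_summable[OF f]] by (rule has_sum_cmult_left)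
  have "(\<lambda>x. norm (f x) * (\<Sum>\<^sub>\<infinity>y\<in>B. norm (g y))) summable_on A"
    using f by (rule summable_on_cmult_left)
  then have "(\<lambda>z. norm (case z of (x, y) \<Rightarrow> f x * g y)) summable_on A \<times> B"
    using g by (subst Infinite_Sum.abs_summable_on_Sigma_iff)
      (auto simp: norm_mult infsum_cmult_right' summable_on_cmult_right infsum_nonneg abs_mult)
  then show "(\<lambda>(x, y). f x * g y) summable_on A \<times> B"
    by (rule abs_summable_summable)
qed

lemma has_sum_dirichlet_convolution:
  fixes a b :: "nat \<Rightarrow> complex" and w :: complex
  defines "A \<equiv> \<lambda>n. a n / of_nat n powr w" and "B \<equiv> \<lambda>n. b n / of_nat n powr w"
  assumes a: "(\<lambda>n. norm (A n)) summable_on {1..}" and b: "(\<lambda>n. norm (B n)) summable_on {1..}"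
  shows "((\<lambda>n. (\<Sum>d | d dvd n. a d * b (n div d)) / of_nat n powr w) has_sum
          (infsum A {1..} * infsum B {1..})) {1..}"
proof -
  define G where "G = (\<lambda>(n, d). a d * b (n div d) / of_nat n powr w)"
  have "((\<lambda>(x, y). A x * B y) has_sum (infsum A {1..} * infsum B {1..})) ({1..} \<times> {1..})"
    using a b by (rule has_sum_mult_abs_summable)
  also have "?this \<longleftrightarrow> (G has_sum (infsum A {1..} * infsum B {1..})) (SIGMA n:{1..}. {d. d dvd n})"
  proof (rule has_sum_reindex_bij_witness[of _ "\<lambda>(n, d). (d, n div d)" "\<lambda>(x, y). (x * y, x)"])
    fix nd assume "nd \<in> (SIGMA n:{1::nat..}. {d. d dvd n})"
    then obtain n d where nd: "nd = (n, d)" "n \<ge> 1" "d dvd n" by auto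
    then have "d > 0" "n div d > 0" by (auto intro!: Nat.gr0I simp: div_greater_zero_iff dvd_imp_le)
    then show "(case case nd of (n, d) \<Rightarrow> (d, n div d) of (x, y) \<Rightarrow> (x * y, x)) = nd"
      and "(case nd of (n, d) \<Rightarrow> (d, n div d)) \<in> {1..} \<times> {1..}" using nd by auto
  qed (auto simp: G_def A_def B_def of_nat_mult_powr)
  finally have "(G has_sum (infsum A {1..} * infsum B {1..})) (SIGMA n:{1..}. {d. d dvd n})" .
  then have "((\<lambda>n. \<Sum>d | d dvd n. G (n, d)) has_sum (infsum A {1..} * infsum B {1..})) {1..}"
    by (rule has_sum_Sigma') (auto intro: has_sum_finite)
  then show ?thesis by (simp add: G_def sum_divide_distrib)
qed

lemma abs_summable_dirichlet_by_bound:
  fixes f :: "nat \<Rightarrow> complex"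
  assumes "\<sigma> > 1" and "\<And>n. n \<ge> 1 \<Longrightarrow> norm (f n) \<le> C * real n powr (-\<sigma>)"
  shows "(\<lambda>n. norm (f n)) summable_on {1..}"
proof (rule Infinite_Sum.abs_summable_on_comparison_test')
  have "summable (\<lambda>n::nat. real n powr (-\<sigma>))" using assms(1) by (subst summable_real_powr_iff) auto
  then have "(\<lambda>n::nat. real n powr (-\<sigma>)) summable_on UNIV"
    by (subst summable_on_UNIV_nonneg_real_iff) auto
  then have "(\<lambda>n::nat. real n powr (-\<sigma>)) summable_on {1..}"
    by (rule summable_on_subset) auto
  then show "(\<lambda>n. C * real n powr (-\<sigma>)) summable_on {1..}" by (rule summable_on_cmult_right)
qed (use assms(2) in auto)

lemma abs_summable_dirichlet_bounded:
  fixes a :: "nat \<Rightarrow> complex"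
  assumes "Re w > 1" and "\<And>n. norm (a n) \<le> 1"
  shows "(\<lambda>n. norm (a n / of_nat n powr w)) summable_on {1..}"
proof (rule abs_summable_dirichlet_by_bound[where \<sigma> = "Re w" and C = 1])
  fix n :: nat assume "n \<ge> 1"
  then show "norm (a n / of_nat n powr w) \<le> 1 * real n powr - Re w"
    using assms(2)[of n] by (simp add: norm_div_of_nat_powr mult_right_mono)
qed (use assms in auto)

lemma abs_summable_moebius_deriv_ratio:
  assumes "Re w > 1"
  shows "(\<lambda>n. norm (moebius_deriv_ratio n / of_nat n powr w)) summable_on {1..}"
proof -
  define e where "e = (Re w - 1) / 2"
  have e: "e > 0" using assms by (simp add: e_def)
  show ?thesis
  proof (rule abs_summable_dirichlet_by_bound[where \<sigma> = "Re w - e" and C = "1 / (2 powr e - 1)"])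
    show "Re w - e > 1" using assms unfolding e_def by (simp add: field_simps)
    fix n :: nat assume n: "n \<ge> 1"
    have "norm (moebius_deriv_ratio n / of_nat n powr w) = norm (moebius_deriv_ratio n) * real n powr (- Re w)"
      using n by (rule norm_div_of_nat_powr)
    also have "\<dots> \<le> (real n powr e / (2 powr e - 1)) * real n powr (- Re w)"
      by (intro mult_right_mono order.trans[OF norm_moebius_deriv_ratio_le card_prime_factors_le_powr])
        (use n e in auto)
    also have "\<dots> = 1 / (2 powr e - 1) * real n powr (- (Re w - e))"
      by (simp add: powr_diff powr_minus field_simps)
    finally show "norm (moebius_deriv_ratio n / of_nat n powr w) \<le> 1 / (2 powr e - 1) * real n powr (- (Re w - e))" .
  qed
qed

lemma moebius_dirichlet_times_zeta:
  assumes w: "Re w > 1"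
  shows "(\<Sum>\<^sub>\<infinity>n\<in>{1..}. of_int (moebius_mu n) / of_nat n powr w) * zeta_dirichlet w = 1"
proof -
  have "norm (of_int (moebius_mu n) :: complex) \<le> 1" for n
    by (auto simp: moebius_mu_def)
  then have "((\<lambda>n. (\<Sum>d | d dvd n. of_int (moebius_mu d) * 1) / of_nat n powr w) has_sum
          ((\<Sum>\<^sub>\<infinity>n\<in>{1..}. of_int (moebius_mu n) / of_nat n powr w) * zeta_dirichlet w)) {1..}"
    unfolding zeta_dirichlet_def
    by (intro has_sum_dirichlet_convolution abs_summable_dirichlet_bounded[OF w]) auto
  moreover have "((\<lambda>n. (\<Sum>d | d dvd n. of_int (moebius_mu d) * 1) / of_nat n powr w :: complex) has_sum 1) {1..}"
  proof -
    have "((\<lambda>n. 1::complex) has_sum 1) {1::nat}" by (rule has_sum_finiteI) auto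
    also have "?this \<longleftrightarrow> ?thesis"
      by (rule has_sum_cong_neutral) (auto simp: sum_divisors_moebius, simp add: moebius_mu_def)
    finally show ?thesis .
  qed
  ultimately show ?thesis using has_sum_unique by blast
qed

section \<open>Sums over prime powers\<close>

lemma has_sum_prime_powers_iff:
  fixes f :: "nat \<Rightarrow> 'a::{comm_monoid_add, topological_space}"
  assumes "\<And>n. n > 0 \<Longrightarrow> \<not> is_singleton (prime_factors n) \<Longrightarrow> f n = 0"
  shows "(f has_sum X) {1..} \<longleftrightarrow> ((\<lambda>(p, k). f (p ^ k)) has_sum X) ({p. prime p} \<times> {1..})"
proof -
  define h where "h = (\<lambda>(p::nat, k::nat). p ^ k)"
  define S where "S = {p::nat. prime p} \<times> {1::nat..}"
  have "inj_on h S"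
    by (auto simp: inj_on_def h_def S_def prime_power_inj'')
  moreover have "h ` S = {n\<in>{1..}. is_singleton (prime_factors n)}"
  proof (intro equalityI subsetI)
    fix n assume "n \<in> h ` S"
    then obtain p k where "prime p" "k \<ge> 1" "n = p ^ k" by (auto simp: h_def S_def)
    then show "n \<in> {n\<in>{1..}. is_singleton (prime_factors n)}"
      by (simp add: Suc_le_eq prime_gt_0_nat prime_factorization_prime_power)
  next
    fix n :: nat assume "n \<in> {n\<in>{1..}. is_singleton (prime_factors n)}"
    then obtain q where n: "n \<ge> 1" "prime_factors n = {q}" by (auto simp: is_singleton_def)
    have "n = q ^ multiplicity q n" using prod_prime_factors[of n] n by simp
    then have "n = h (q, multiplicity q n)" by (simp only: h_def prod.case)
    moreover have "(q, multiplicity q n) \<in> S"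
      using n by (auto simp: S_def prime_factors_multiplicity)
    ultimately show "n \<in> h ` S" by (rule image_eqI)
  qed
  moreover have "(f has_sum X) {1..} \<longleftrightarrow> (f has_sum X) {n\<in>{1..}. is_singleton (prime_factors n)}"
    by (rule has_sum_cong_neutral) (use assms in auto)
  ultimately show ?thesis
    using has_sum_reindex[of h S f] by (simp add: comp_def h_def S_def case_prod_unfold)
qed

lemma F_prime_eq_has_sum_prime_powers:
  assumes w: "Re w > 1"
    and X: "((\<lambda>(p, k). 1 / of_nat p / (of_nat p powr w) ^ k) has_sum X) ({p. prime p} \<times> {1..})"
  shows "F_prime w = X"
proof -
  define z where "z p = 1 / (of_nat p powr w :: complex)" for p
  have z: "norm (z p) < 1" if "prime p" for p
  proof -
    have "1 < real p powr Re w" using prime_gt_1_nat[OF that] w powr_less_mono[of 0 "Re w" "real p"] by simp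
    then show ?thesis by (simp add: z_def norm_divide norm_of_nat_powr divide_less_eq)
  qed
  have "((\<lambda>p. 1 / of_nat p * (z p / (1 - z p))) has_sum X) {p. prime p}"
  proof (rule has_sum_Sigma'[OF X])
    fix p :: nat assume "p \<in> {p. prime p}"
    then have "((\<lambda>k. 1 / of_nat p * z p ^ k) has_sum (1 / of_nat p * (z p / (1 - z p)))) {1..}"
      using z by (intro has_sum_cmult_right has_sum_geometric_from_1) auto
    then show "((\<lambda>k. case (p, k) of (p, k) \<Rightarrow> 1 / of_nat p / (of_nat p powr w) ^ k) has_sum
               (1 / of_nat p * (z p / (1 - z p)))) {1..}"
      by (simp add: z_def power_one_over)
  qed
  moreover have "1 / of_nat p * (z p / (1 - z p)) = 1 / (of_nat p powr (w + 1) - of_nat p)"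
    if "prime p" for p
  proof -
    have "of_nat p \<noteq> (0::complex)" "z p \<noteq> 1" using that z[OF that] by auto
    moreover have "of_nat p powr (w + 1) = of_nat p powr w * (of_nat p :: complex)"
      using that by (simp add: powr_add)
    ultimately show ?thesis by (auto simp: z_def field_simps)
  qed
  ultimately have "((\<lambda>p. 1 / (of_nat p powr (w + 1) - of_nat p)) has_sum X) {p. prime p}"
    by (rule has_sum_cong[THEN iffD1, rotated]) simp
  then show ?thesis unfolding F_prime_def by (rule infsumI)
qed

lemma moebius_deriv_dirichlet_times_zeta:
  assumes w: "Re w > 1"
  shows "(\<Sum>\<^sub>\<infinity>n\<in>{1..}. moebius_deriv_ratio n / of_nat n powr w) * zeta_dirichlet w = - F_prime w"
proof -
  let ?P = "(\<Sum>\<^sub>\<infinity>n\<in>{1..}. moebius_deriv_ratio n / of_nat n powr w) * zeta_dirichlet w"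
  have conv: "((\<lambda>n. (\<Sum>d | d dvd n. moebius_deriv_ratio d * 1) / of_nat n powr w) has_sum ?P) {1..}"
    unfolding zeta_dirichlet_def
    by (intro has_sum_dirichlet_convolution abs_summable_moebius_deriv_ratio
        abs_summable_dirichlet_bounded w) auto
  have prime_power_coefficient: "(\<Sum>d | d dvd p ^ k. moebius_deriv_ratio d) / (of_nat p ^ k) powr w
                                = - (1 / of_nat p / (of_nat p powr w) ^ k)" if "prime p" "k \<ge> 1" for p k
  proof -
    have "prime_factors (p ^ k) = {p}" "p ^ k > 0"
      using that by (auto simp: prime_factorization_prime_power prime_gt_0_nat)
    then show ?thesis by (simp add: sum_divisors_moebius_deriv_ratio of_nat_power_powr)
  qed
  from conv have "((\<lambda>(p, k). (\<Sum>d | d dvd p ^ k. moebius_deriv_ratio d * 1) / of_nat (p ^ k) powr w)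
               has_sum ?P) ({p. prime p} \<times> {1..})"
    by (subst (asm) has_sum_prime_powers_iff) (auto simp: sum_divisors_moebius_deriv_ratio case_prod_unfold)
  also have "?this \<longleftrightarrow> ((\<lambda>(p, k). - (1 / of_nat p / (of_nat p powr w) ^ k)) has_sum ?P)
                         ({p. prime p} \<times> {1..})"
    by (intro has_sum_cong) (auto simp: prime_power_coefficient)
  finally have "((\<lambda>(p, k). 1 / of_nat p / (of_nat p powr w) ^ k) has_sum - ?P) ({p. prime p} \<times> {1..})"
    by (simp add: has_sum_uminus case_prod_unfold)
  then show ?thesis using F_prime_eq_has_sum_prime_powers[OF w] by simp
qed

theorem mainTheorem19:
  fixes s :: complex
  assumes "Re s > 2"
  shows "((\<lambda>n::nat. of_int (moebius_mu n) * of_nat (arith_deriv n) / of_nat n powr s)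
           has_sum (- F_prime (s - 1) / zeta_dirichlet (s - 1))) {1..}"
proof -
  define w where "w = s - 1"
  have w: "Re w > 1" using assms by (simp add: w_def)
  have "zeta_dirichlet w \<noteq> 0" using moebius_dirichlet_times_zeta[OF w] by auto
  then have "(\<Sum>\<^sub>\<infinity>n\<in>{1..}. moebius_deriv_ratio n / of_nat n powr w) = - F_prime w / zeta_dirichlet w"
    using moebius_deriv_dirichlet_times_zeta[OF w] by (simp add: field_simps)
  then have "((\<lambda>n. moebius_deriv_ratio n / of_nat n powr w) has_sum - F_prime w / zeta_dirichlet w) {1..}"
    using has_sum_infsum[OF abs_summable_summable[OF abs_summable_moebius_deriv_ratio[OF w]]] by simp
  moreover have "moebius_deriv_ratio n / of_nat n powr w
               = of_int (moebius_mu n) * of_nat (arith_deriv n) / of_nat n powr s" if "n \<in> {1..}" for n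
  proof -
    have "(of_nat n :: complex) powr s = of_nat n powr (w + 1)" by (simp add: w_def)
    also have "\<dots> = of_nat n powr w * of_nat n powr 1" by (rule powr_add)
    finally show ?thesis using that by (simp add: moebius_deriv_ratio_def field_simps)
  qed
  ultimately show ?thesis
    unfolding w_def by (rule has_sum_cong[THEN iffD1, rotated])
qed

end
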